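(* Let $a\ge b\ge1$ be integers with $a>\frac{1+\sqrt5}{2}b$, let $\beta>1$ be the positive root of $\beta^2=a\beta+b$ and $\beta'=a-\beta$. Then \[ \sup_{j\in\mathbb Z}P_{\mathbf h(j-\beta)}(\beta')\;\le\;\frac{b-1}{1-(\beta')^2}\;<\;2\beta-a-1 . \]
   Context: For an algebraic integer $\beta$, the $\beta$-adic expansion of $x\in\mathbb Z[\beta]$ is the unique infinite word $\mathbf h(x)=u_0u_1u_2\cdots$ with $u_n\in\{0,1,\dots,|N(\beta)|-1\}$ such that $x-\sum_{i=0}^{n-1}u_i\beta^i\in\beta^n\mathbb Z[\beta]$ for all $n\in\mathbb N$; here $|N(\beta)|=b$. For an infinite word $\mathbf u=u_0u_1\cdots$ of integers, $P_{\mathbf u}(X)=\sum_{n\ge0}u_nX^n$. Note $j-\beta\in\mathbb Z[\beta]$ for $j\in\mathbb Z$. *)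

theory Defs
  imports Complex_Main
begin

definition Zbeta :: "real \<Rightarrow> real set" where
  "Zbeta \<beta> = {x. \<exists>(c::nat \<Rightarrow> int) (N::nat). x = (\<Sum>i<N. of_int (c i) * \<beta> ^ i)}"

text \<open>beta-adic expansion of x with digit bound nb = |N(beta)|: the unique digit word u
  with u n in {0,...,nb-1} and x - sum_{i<n} u_i beta^i in beta^n Z[beta] for all n.\<close>
definition beta_expansion :: "real \<Rightarrow> int \<Rightarrow> real \<Rightarrow> (nat \<Rightarrow> int)" where
  "beta_expansion \<beta> nb x = (THE u. (\<forall>n. u n \<in> {0..<nb}) \<and>
      (\<forall>n. x - (\<Sum>i<n. of_int (u i) * \<beta> ^ i) \<in> (\<lambda>y. \<beta> ^ n * y) ` Zbeta \<beta>))"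

definition Pword :: "(nat \<Rightarrow> int) \<Rightarrow> real \<Rightarrow> real" where
  "Pword u X = (\<Sum>n. of_int (u n) * X ^ n)"

end

theory Submission
  imports Defs
begin

text \<open>
  Because \<open>\<beta>\<close> is an irrational root of \<open>X\<^sup>2 - a X - b\<close>, \<open>\<int>[\<beta>] = \<int> + \<int>\<beta>\<close> and an integer lies
  in \<open>\<beta> \<int>[\<beta>]\<close> only if \<open>b\<close> divides it, so digits in \<open>{0..b-1}\<close> are unique; for \<open>m + k\<beta>\<close>
  they are produced by division with remainder, since \<open>m = b t + u\<close> gives
  \<open>m + k\<beta> - u = \<beta> ((k - t a) + t \<beta>)\<close>.
  The conjugate \<open>\<beta>' = a - \<beta> = -b/\<beta>\<close> lies in \<open>(-1, 0)\<close>, so the odd-indexed terms of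
  \<open>P(\<beta>')\<close> are non-positive and \<open>P(\<beta>') \<le> (b - 1) \<Sum> \<beta>'\<^bsup>2n\<^esup> = (b - 1) / (1 - \<beta>'\<^sup>2)\<close>.
  Substituting \<open>\<beta>' = -b/\<beta>\<close>, the second inequality becomes
  \<open>(b - 1) \<beta>\<^sup>3 < (\<beta>\<^sup>2 - \<beta> + b)(\<beta>\<^sup>2 - b\<^sup>2)\<close>, which follows from
  \<open>\<beta>\<^sup>2 - b\<beta> - b\<^sup>2 > 0\<close>, i.e. from \<open>\<beta> > \<phi> b\<close> with \<open>\<phi>\<close> the golden ratio.
\<close>

lemma mem_Zbeta_quadratic_iff:
  fixes a b :: int and \<beta> :: real
  assumes \<beta>: "\<beta>\<^sup>2 = of_int a * \<beta> + of_int b"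
  shows "x \<in> Zbeta \<beta> \<longleftrightarrow> (\<exists>p q::int. x = of_int p + of_int q * \<beta>)"
proof
  have pow: "\<exists>p q::int. \<beta> ^ i = of_int p + of_int q * \<beta>" for i
  proof (induction i)
    case 0
    show ?case by (rule exI[of _ 1], rule exI[of _ 0]) simp
  next
    case (Suc i)
    then obtain p q :: int where "\<beta> ^ i = of_int p + of_int q * \<beta>" by blast
    then have "\<beta> ^ Suc i = of_int p * \<beta> + of_int q * \<beta>\<^sup>2"
      by (simp add: algebra_simps power2_eq_square)
    also have "\<dots> = of_int (q * b) + of_int (p + q * a) * \<beta>"
      using \<beta> by (simp add: algebra_simps)
    finally show ?case by blast
  qed
  assume "x \<in> Zbeta \<beta>"
  then obtain c N where x: "x = (\<Sum>i<N. of_int (c i) * \<beta> ^ i)" by (auto simp: Zbeta_def)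
  have "\<exists>p q::int. (\<Sum>i<N. of_int (c i) * \<beta> ^ i) = of_int p + of_int q * \<beta>"
  proof (induction N)
    case 0
    show ?case by (rule exI[of _ 0], rule exI[of _ 0]) simp
  next
    case (Suc N)
    obtain p q :: int where "(\<Sum>i<N. of_int (c i) * \<beta> ^ i) = of_int p + of_int q * \<beta>"
      using Suc.IH by blast
    moreover obtain p' q' :: int where "\<beta> ^ N = of_int p' + of_int q' * \<beta>" using pow by blast
    ultimately have "(\<Sum>i<Suc N. of_int (c i) * \<beta> ^ i)
        = of_int (p + c N * p') + of_int (q + c N * q') * \<beta>"
      by (simp add: algebra_simps)
    then show ?case by blast
  qed
  with x show "\<exists>p q::int. x = of_int p + of_int q * \<beta>" by simp
next
  assume "\<exists>p q::int. x = of_int p + of_int q * \<beta>"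
  then obtain p q :: int where "x = of_int p + of_int q * \<beta>" by blast
  then have "x = (\<Sum>i<2. of_int (if i = 0 then p else q) * \<beta> ^ i)"
    by (simp add: numeral_2_eq_2)
  then show "x \<in> Zbeta \<beta>" unfolding Zbeta_def by fast
qed

lemma quadratic_root_gt:
  fixes a b \<beta> :: real
  assumes "\<beta>\<^sup>2 = a * \<beta> + b" and "0 < b" and "0 < \<beta>"
  shows "a < \<beta>"
proof -
  have "\<beta> * (\<beta> - a) = b" using assms(1) by (simp add: power2_eq_square algebra_simps)
  with assms(2,3) show ?thesis by (smt (verit) mult_nonneg_nonpos)
qed

lemma quadratic_root_not_rational:
  fixes a b :: int and \<beta> :: real
  assumes \<beta>: "\<beta>\<^sup>2 = of_int a * \<beta> + of_int b" and "1 \<le> b" "b \<le> a" "of_int a < \<beta>"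
  shows "\<beta> \<notin> \<rat>"
proof
  assume "\<beta> \<in> \<rat>"
  then obtain r s :: int where s: "s > 0" "coprime r s" "\<beta> = of_int r / of_int s"
    by (rule Rats_cases')
  with \<beta> have "(of_int r / of_int s)\<^sup>2 = of_int a * (of_int r / of_int s) + (of_int b :: real)"
    by simp
  then have "of_int (r\<^sup>2) = (of_int (a * r * s + b * s\<^sup>2) :: real)"
    using s(1) by (simp add: field_simps power2_eq_square)
  then have rs: "r\<^sup>2 = a * r * s + b * s\<^sup>2" by (simp only: of_int_eq_iff)
  have "s dvd r\<^sup>2" unfolding rs by (simp add: power2_eq_square)
  moreover have "coprime (r\<^sup>2) s" using s(2) by simp
  ultimately have "s = 1"
    using s(1) coprime_common_divisor_int[of "r\<^sup>2" s s] by simp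
  \<comment> \<open>so \<open>\<beta> = r\<close> is an integer root and \<open>b = r (r - a) \<ge> r > a\<close>\<close>
  with s rs \<open>of_int a < \<beta>\<close> have "a < r" "b = r * (r - a)"
    by (simp_all add: power2_eq_square algebra_simps)
  moreover have "r * 1 \<le> r * (r - a)"
    using \<open>a < r\<close> \<open>1 \<le> b\<close> \<open>b \<le> a\<close> by (intro mult_left_mono) auto
  ultimately show False using \<open>b \<le> a\<close> by simp
qed

lemma dvd_if_of_int_eq_times_Zbeta:
  fixes a b d :: int and \<beta> y :: real
  assumes \<beta>: "\<beta>\<^sup>2 = of_int a * \<beta> + of_int b" and irrational: "\<beta> \<notin> \<rat>"
    and "y \<in> Zbeta \<beta>" and d: "of_int d = \<beta> * y"
  shows "b dvd d"
proof -
  obtain p q :: int where y: "y = of_int p + of_int q * \<beta>"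
    using \<open>y \<in> Zbeta \<beta>\<close> mem_Zbeta_quadratic_iff[OF \<beta>] by blast
  have "of_int d = of_int p * \<beta> + of_int q * \<beta>\<^sup>2"
    using d by (simp add: y algebra_simps power2_eq_square)
  also have "\<dots> = of_int (q * b) + of_int (p + q * a) * \<beta>"
    using \<beta> by (simp add: algebra_simps)
  finally have dqb: "of_int (p + q * a) * \<beta> = of_int (d - q * b)" by simp
  have "p + q * a = 0"
  proof (rule ccontr)
    assume "p + q * a \<noteq> 0"
    then have "(of_int (p + q * a) :: real) \<noteq> 0" using of_int_eq_0_iff by blast
    with dqb have "\<beta> = of_int (d - q * b) / of_int (p + q * a)"
      by (metis nonzero_mult_div_cancel_left)
    with irrational show False by simp
  qed
  with dqb have "(of_int d :: real) = of_int (q * b)" by simp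
  then have "d = q * b" by (rule of_int_eq_iff[THEN iffD1])
  then show ?thesis by simp
qed

definition is_beta_expansion :: "real \<Rightarrow> int \<Rightarrow> real \<Rightarrow> (nat \<Rightarrow> int) \<Rightarrow> bool" where
  "is_beta_expansion \<beta> nb x u \<longleftrightarrow> (\<forall>n. u n \<in> {0..<nb}) \<and>
      (\<forall>n. x - (\<Sum>i<n. of_int (u i) * \<beta> ^ i) \<in> (\<lambda>y. \<beta> ^ n * y) ` Zbeta \<beta>)"

lemma beta_expansion_unique:
  fixes a b :: int and \<beta> x :: real
  assumes \<beta>: "\<beta>\<^sup>2 = of_int a * \<beta> + of_int b" and irrational: "\<beta> \<notin> \<rat>"
    and u: "is_beta_expansion \<beta> b x u" and v: "is_beta_expansion \<beta> b x v"
  shows "u = v"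
proof
  fix n
  show "u n = v n"
  proof (induction n rule: less_induct)
    case (less n)
    have same_prefix: "(\<Sum>i<n. of_int (u i) * \<beta> ^ i) = (\<Sum>i<n. of_int (v i) * \<beta> ^ i)"
      using less by (intro sum.cong) auto
    obtain y1 where y1: "y1 \<in> Zbeta \<beta>" "x - (\<Sum>i<Suc n. of_int (u i) * \<beta> ^ i) = \<beta> ^ Suc n * y1"
      using u unfolding is_beta_expansion_def by blast
    obtain y2 where y2: "y2 \<in> Zbeta \<beta>" "x - (\<Sum>i<Suc n. of_int (v i) * \<beta> ^ i) = \<beta> ^ Suc n * y2"
      using v unfolding is_beta_expansion_def by blast
    have "\<beta> ^ n * of_int (v n - u n) = \<beta> ^ n * (\<beta> * (y1 - y2))"
      using y1(2) y2(2) same_prefix by (simp add: algebra_simps)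
    moreover have "\<beta> \<noteq> 0" using irrational by auto
    ultimately have d: "of_int (v n - u n) = \<beta> * (y1 - y2)" by simp
    have "y1 - y2 \<in> Zbeta \<beta>"
    proof -
      obtain p1 q1 p2 q2 :: int
        where "y1 = of_int p1 + of_int q1 * \<beta>" "y2 = of_int p2 + of_int q2 * \<beta>"
        using y1(1) y2(1) mem_Zbeta_quadratic_iff[OF \<beta>] by meson
      then have "y1 - y2 = of_int (p1 - p2) + of_int (q1 - q2) * \<beta>" by (simp add: algebra_simps)
      then show ?thesis using mem_Zbeta_quadratic_iff[OF \<beta>] by blast
    qed
    then have dvd: "b dvd v n - u n" using d by (rule dvd_if_of_int_eq_times_Zbeta[OF \<beta> irrational])
    have "u n \<in> {0..<b}" "v n \<in> {0..<b}" using u v unfolding is_beta_expansion_def by blast+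
    then have small: "\<bar>v n - u n\<bar> < \<bar>b\<bar>" by (auto simp: abs_less_iff)
    show "u n = v n"
    proof (rule ccontr)
      assume "u n \<noteq> v n"
      then have "\<bar>b\<bar> \<le> \<bar>v n - u n\<bar>" using dvd by (intro dvd_imp_le_int) auto
      with small show False by simp
    qed
  qed
qed

definition beta_shift :: "int \<Rightarrow> int \<Rightarrow> int \<times> int \<Rightarrow> int \<times> int" where
  "beta_shift a b = (\<lambda>(m, k). (k - (m div b) * a, m div b))"

lemma beta_shift_eq:
  fixes a b m k :: int and \<beta> :: real
  assumes \<beta>: "\<beta>\<^sup>2 = of_int a * \<beta> + of_int b"
  defines "mk' \<equiv> beta_shift a b (m, k)"
  shows "of_int m + of_int k * \<beta> - of_int (m mod b) = \<beta> * (of_int (fst mk') + of_int (snd mk') * \<beta>)"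
proof -
  define t where "t = m div b"
  have "(of_int m :: real) = of_int (b * t + m mod b)" unfolding t_def by simp
  then have "of_int m + of_int k * \<beta> - of_int (m mod b) = of_int b * of_int t + of_int k * \<beta>"
    by simp
  also have "\<dots> = of_int k * \<beta> - of_int t * of_int a * \<beta> + of_int t * \<beta>\<^sup>2"
    using \<beta> by (simp add: algebra_simps)
  also have "\<dots> = \<beta> * (of_int (fst mk') + of_int (snd mk') * \<beta>)"
    unfolding mk'_def beta_shift_def t_def by (simp add: algebra_simps power2_eq_square)
  finally show ?thesis .
qed

lemma is_beta_expansion_iterated_shift:
  fixes a b m k :: int and \<beta> :: real
  assumes \<beta>: "\<beta>\<^sup>2 = of_int a * \<beta> + of_int b" and "1 \<le> b"
  shows "is_beta_expansion \<beta> b (of_int m + of_int k * \<beta>)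
           (\<lambda>n. fst ((beta_shift a b ^^ n) (m, k)) mod b)"
proof -
  define mk where "mk n = (beta_shift a b ^^ n) (m, k)" for n
  define u where "u n = fst (mk n) mod b" for n
  have rest: "of_int m + of_int k * \<beta> - (\<Sum>i<n. of_int (u i) * \<beta> ^ i)
      = \<beta> ^ n * (of_int (fst (mk n)) + of_int (snd (mk n)) * \<beta>)" for n
  proof (induction n)
    case 0
    show ?case by (simp add: mk_def)
  next
    case (Suc n)
    have "of_int m + of_int k * \<beta> - (\<Sum>i<Suc n. of_int (u i) * \<beta> ^ i)
        = \<beta> ^ n * (of_int (fst (mk n)) + of_int (snd (mk n)) * \<beta> - of_int (fst (mk n) mod b))"
      using Suc.IH by (simp add: u_def algebra_simps)
    also have "\<dots> = \<beta> ^ Suc n * (of_int (fst (mk (Suc n))) + of_int (snd (mk (Suc n))) * \<beta>)"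
      using beta_shift_eq[OF \<beta>, of "fst (mk n)" "snd (mk n)"] by (simp add: mk_def)
    finally show ?case .
  qed
  have "\<forall>n. u n \<in> {0..<b}" using \<open>1 \<le> b\<close> by (simp add: u_def)
  moreover have "of_int (fst (mk n)) + of_int (snd (mk n)) * \<beta> \<in> Zbeta \<beta>" for n
    using mem_Zbeta_quadratic_iff[OF \<beta>] by blast
  ultimately have "is_beta_expansion \<beta> b (of_int m + of_int k * \<beta>) u"
    unfolding is_beta_expansion_def rest by blast
  then show ?thesis unfolding u_def mk_def .
qed

lemma is_beta_expansion_beta_expansion:
  fixes a b :: int and \<beta> x :: real
  assumes \<beta>: "\<beta>\<^sup>2 = of_int a * \<beta> + of_int b" and "1 \<le> b" and irrational: "\<beta> \<notin> \<rat>"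
    and "x \<in> Zbeta \<beta>"
  shows "is_beta_expansion \<beta> b x (beta_expansion \<beta> b x)"
proof -
  obtain m k :: int where x: "x = of_int m + of_int k * \<beta>"
    using \<open>x \<in> Zbeta \<beta>\<close> mem_Zbeta_quadratic_iff[OF \<beta>] by blast
  have "\<exists>!u. is_beta_expansion \<beta> b x u"
    using is_beta_expansion_iterated_shift[OF \<beta> \<open>1 \<le> b\<close>, of m k]
      beta_expansion_unique[OF \<beta> irrational] unfolding x by blast
  then show ?thesis
    unfolding beta_expansion_def is_beta_expansion_def[symmetric] by (rule theI')
qed

lemma Pword_le_of_bounded_digits:
  fixes u :: "nat \<Rightarrow> int" and c X :: real
  assumes nonneg: "\<And>n. 0 \<le> u n" and bounded: "\<And>n. of_int (u n) \<le> c"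
    and "-1 < X" "X \<le> 0"
  shows "Pword u X \<le> c / (1 - X\<^sup>2)"
proof -
  \<comment> \<open>\<open>f n\<close> is \<open>c X\<^sup>n\<close> for even \<open>n\<close> and \<open>0\<close> for odd \<open>n\<close>, where the terms are \<open>\<le> 0\<close>\<close>
  define f where "f n = c / 2 * (X ^ n + (-X) ^ n)" for n
  have "X\<^sup>2 < 1" using assms by (simp add: abs_square_less_1)
  then have sum_eq: "c / 2 * (1 / (1 - X) + 1 / (1 - -X)) = c / (1 - X\<^sup>2)"
    using assms by (simp add: field_simps power2_eq_square)
  have "f sums (c / 2 * (1 / (1 - X) + 1 / (1 - -X)))"
    unfolding f_def using assms by (intro sums_mult sums_add geometric_sums) auto
  then have f: "f sums (c / (1 - X\<^sup>2))" unfolding sum_eq .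
  have "summable (\<lambda>n. c * \<bar>X\<bar> ^ n)"
    using assms by (intro summable_mult summable_geometric) auto
  moreover have "norm (of_int (u n) * X ^ n) \<le> c * \<bar>X\<bar> ^ n" for n
    using nonneg[of n] bounded[of n] by (simp add: abs_mult power_abs mult_right_mono)
  ultimately have "summable (\<lambda>n. of_int (u n) * X ^ n)"
    by (rule summable_comparison_test')
  moreover have "of_int (u n) * X ^ n \<le> f n" for n
  proof (cases "even n")
    case True
    then show ?thesis
      using bounded[of n] by (simp add: f_def mult_right_mono zero_le_even_power)
  next
    case False
    then have "X ^ n \<le> 0" using \<open>X \<le> 0\<close> by (simp add: power_le_zero_eq odd_pos)
    with False show ?thesis
      using nonneg[of n] by (simp add: f_def mult_nonneg_nonpos)
  qed
  ultimately have "Pword u X \<le> suminf f"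
    unfolding Pword_def using f by (intro suminf_le) (auto simp: sums_iff)
  with f show ?thesis by (simp add: sums_iff)
qed

lemma Pword_beta_expansion_le:
  fixes a b :: int and \<beta> x :: real
  assumes \<beta>: "\<beta>\<^sup>2 = of_int a * \<beta> + of_int b" and "1 \<le> b" "b \<le> a" "of_int a < \<beta>"
    and "x \<in> Zbeta \<beta>"
  shows "Pword (beta_expansion \<beta> b x) (of_int a - \<beta>) \<le> (of_int b - 1) / (1 - (of_int a - \<beta>)\<^sup>2)"
proof (rule Pword_le_of_bounded_digits)
  have "is_beta_expansion \<beta> b x (beta_expansion \<beta> b x)"
    using quadratic_root_not_rational[OF \<beta> assms(2-4)] assms(2,5)
    by (intro is_beta_expansion_beta_expansion[OF \<beta>])
  then have digit: "beta_expansion \<beta> b x n \<in> {0..<b}" for n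
    unfolding is_beta_expansion_def by blast
  show "0 \<le> beta_expansion \<beta> b x n" for n using digit[of n] by simp
  show "of_int (beta_expansion \<beta> b x n) \<le> real_of_int b - 1" for n
    using digit[of n] by simp
  have "real_of_int b < \<beta>" using assms(3,4) by linarith
  then have "-1 < - of_int b / \<beta>" using assms(2) by (simp add: field_simps)
  also have "- of_int b / \<beta> = of_int a - \<beta>"
    using \<beta> \<open>real_of_int b < \<beta>\<close> assms(2) by (simp add: field_simps power2_eq_square)
  finally show "-1 < real_of_int a - \<beta>" .
  show "real_of_int a - \<beta> \<le> 0" using assms(4) by simp
qed

lemma golden_ratio_gap:
  fixes b \<beta> :: real
  assumes "0 < b" and "(1 + sqrt 5) / 2 * b < \<beta>"
  shows "b * \<beta> + b\<^sup>2 < \<beta>\<^sup>2"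
proof -
  define \<phi> :: real where "\<phi> = (1 + sqrt 5) / 2"
  have "(\<beta> - \<phi> * b) * (\<beta> + (\<phi> - 1) * b) = \<beta>\<^sup>2 - b * \<beta> - (\<phi>\<^sup>2 - \<phi>) * b\<^sup>2"
    by (simp add: algebra_simps power2_eq_square)
  also have "\<phi>\<^sup>2 - \<phi> = 1" by (simp add: \<phi>_def power2_eq_square field_simps)
  finally have "\<beta>\<^sup>2 - b * \<beta> - b\<^sup>2 = (\<beta> - \<phi> * b) * (\<beta> + (\<phi> - 1) * b)" by simp
  moreover have "0 < \<beta> - \<phi> * b" using assms by (simp add: \<phi>_def)
  moreover have "0 < \<beta> + (\<phi> - 1) * b"
  proof -
    have "1 < \<phi>" by (simp add: \<phi>_def)
    with \<open>0 < b\<close> have "0 < (\<phi> - 1) * b" by simp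
    with \<open>0 < \<beta> - \<phi> * b\<close> \<open>1 < \<phi>\<close> \<open>0 < b\<close> show ?thesis
      by (smt (verit) mult_pos_pos)
  qed
  ultimately show ?thesis by (smt (verit) mult_pos_pos)
qed

lemma conjugate_bound_lt:
  fixes a b \<beta> :: real
  assumes \<beta>: "\<beta>\<^sup>2 = a * \<beta> + b" and "0 < b" and "1 < \<beta>" and gap: "b * \<beta> + b\<^sup>2 < \<beta>\<^sup>2"
  shows "(b - 1) / (1 - (a - \<beta>)\<^sup>2) < 2 * \<beta> - a - 1"
proof -
  define D where "D = \<beta>\<^sup>2 - b\<^sup>2"
  define Q where "Q = \<beta>\<^sup>2 - \<beta> + b"
  have conj: "a - \<beta> = - b / \<beta>" using \<beta> \<open>1 < \<beta>\<close> by (simp add: field_simps power2_eq_square)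
  have lhs: "1 - (a - \<beta>)\<^sup>2 = D / \<beta>\<^sup>2"
    unfolding conj D_def using \<open>1 < \<beta>\<close> by (simp add: field_simps power2_eq_square)
  have rhs: "2 * \<beta> - a - 1 = Q / \<beta>"
    unfolding Q_def using \<beta> \<open>1 < \<beta>\<close> by (simp add: field_simps power2_eq_square)
  have "\<beta> * 1 < \<beta> * \<beta>" using \<open>1 < \<beta>\<close> by (intro mult_strict_left_mono) auto
  then have "\<beta> < \<beta>\<^sup>2" by (simp only: mult_1_right power2_eq_square)
  then have "D > b * \<beta>" "Q > 0" "b * \<beta> > 0"
    using gap \<open>0 < b\<close> \<open>1 < \<beta>\<close> unfolding D_def Q_def by simp_all
  moreover have "Q * (b * \<beta>) - (b - 1) * \<beta> ^ 3 = \<beta> * (\<beta>\<^sup>2 - b * \<beta> + b\<^sup>2)"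
    by (simp add: Q_def algebra_simps power2_eq_square power3_eq_cube)
  moreover have "\<beta>\<^sup>2 - b * \<beta> + b\<^sup>2 > 0" using gap \<open>0 < b\<close> by (smt (verit) zero_less_power)
  ultimately have key: "(b - 1) * \<beta> ^ 3 < Q * D"
    using \<open>1 < \<beta>\<close> by (smt (verit) mult_pos_pos mult_strict_left_mono)
  have "(b - 1) / (D / \<beta>\<^sup>2) = ((b - 1) * \<beta> ^ 3) / (D * \<beta>)"
    using \<open>1 < \<beta>\<close> \<open>D > b * \<beta>\<close> \<open>b * \<beta> > 0\<close> by (simp add: field_simps power2_eq_square power3_eq_cube)
  also have "\<dots> < (Q * D) / (D * \<beta>)"
    using key \<open>1 < \<beta>\<close> \<open>D > b * \<beta>\<close> \<open>b * \<beta> > 0\<close> by (intro divide_strict_right_mono) auto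
  also have "\<dots> = Q / \<beta>" using \<open>D > b * \<beta>\<close> \<open>b * \<beta> > 0\<close> by simp
  finally show ?thesis unfolding lhs rhs .
qed

theorem mainTheorem4:
  fixes a b :: int and \<beta> :: real
  assumes "1 \<le> b" and "b \<le> a"
    and "real_of_int a > (1 + sqrt 5) / 2 * real_of_int b"
    and "\<beta> > 1" and "\<beta> ^ 2 = real_of_int a * \<beta> + real_of_int b"
  shows "(\<forall>j::int. Pword (beta_expansion \<beta> b (real_of_int j - \<beta>)) (real_of_int a - \<beta>)
            \<le> (real_of_int b - 1) / (1 - (real_of_int a - \<beta>) ^ 2))
       \<and> (real_of_int b - 1) / (1 - (real_of_int a - \<beta>) ^ 2) < 2 * \<beta> - real_of_int a - 1"
proof (intro conjI allI)
  note \<beta> = assms(5)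
  have "0 < real_of_int b" using assms(1) by simp
  have "real_of_int a < \<beta>" using quadratic_root_gt[OF \<beta>] assms(1,4) by simp
  fix j :: int
  have "of_int j - \<beta> = of_int j + of_int (-1) * \<beta>" by simp
  then have "of_int j - \<beta> \<in> Zbeta \<beta>" using mem_Zbeta_quadratic_iff[OF \<beta>] by blast
  then show "Pword (beta_expansion \<beta> b (of_int j - \<beta>)) (of_int a - \<beta>)
      \<le> (of_int b - 1) / (1 - (of_int a - \<beta>)\<^sup>2)"
    using Pword_beta_expansion_le[OF \<beta> assms(1,2) \<open>real_of_int a < \<beta>\<close>] by blast
  have "of_int b * \<beta> + (of_int b)\<^sup>2 < \<beta>\<^sup>2"
    using assms(3) \<open>real_of_int a < \<beta>\<close> \<open>0 < real_of_int b\<close> by (intro golden_ratio_gap) auto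
  then show "(of_int b - 1) / (1 - (of_int a - \<beta>)\<^sup>2) < 2 * \<beta> - of_int a - 1"
    by (rule conjugate_bound_lt[OF \<beta> \<open>0 < real_of_int b\<close> assms(4)])
qed

end
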